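(* Let $p,q$ be coprime positive integers and $n$ an integer with $1\le n\le q$. If $p$ and $n$ are coprime, then \[ \mathrm{vu}(VT_{p,q}^n)\ge \frac{(p-1)(q-n)}{2}. \]
   Context: Braid conventions: braids on $p$ strands are drawn horizontally, oriented left to right, with positions $1,\dots,p$ numbered from top to bottom, and words are read left to right. The generator $\sigma_m$ is a classical crossing at which the strand in position $m$ moves to position $m+1$, passing over the strand moving from position $m+1$ to position $m$. A virtual crossing is drawn with a small circle and has no over/under information. The standard $(p,q)$-torus knot diagram is the closure of $(\sigma_1\cdots\sigma_{p-1})^q$. In each of the $q$ blocks $\sigma_1\cdots\sigma_{p-1}$, one strand (an overstrand) passes over all other strands. $VT^n_{p,q}$ is the virtual knot whose diagram is the closure of the braid obtained by replacing by virtual crossings all crossings of the first $n$ blocks, i.e. the crossings on the overstrands $a_1,\dots,a_n$ taken in the canonical order. Virtual knots are considered up to generalized Reidemeister moves: classical R1–R3, virtual VR1–VR3 and mixed MR. A crossing change switches a classical crossing. $VT^n_{p,q}$ is virtually null-homotopic, i.e. it can be turned into the unknot by these moves and crossing changes. $\mathrm{vu}$ denotes the minimal number of crossing changes needed to do so (the virtual unknotting number). *)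

theory Defs
  imports Main "HOL-Library.Extended_Nat"
begin

text \<open>A virtual knot diagram is represented by its (signed) Gauss code: the cyclic
sequence of classical crossings met when travelling once along the knot.  Virtual crossings do not appear, so the
virtual moves VR1-VR3 and the mixed move MR act trivially on Gauss codes; virtual knots
are equivalence classes of Gauss codes modulo the Reidemeister moves below
(Goussarov-Polyak-Viro).\<close>

datatype gletter = GL (lab: nat) (over: bool) (positive: bool)

type_synonym gcode = "gletter list"

definition labels :: "gcode \<Rightarrow> nat set" where
  "labels w = lab ` set w"

text \<open>R1, deletion direction: a kink (adjacent over/under passages of one crossing,
any order, any sign).\<close>
definition r1_del :: "gcode \<Rightarrow> gcode \<Rightarrow> bool" where
  "r1_del w w' \<longleftrightarrow> (\<exists>x y a ov s. w = x @ [GL a ov s, GL a (\<not> ov) s] @ y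
      \<and> w' = x @ y \<and> a \<notin> labels w')"

text \<open>R2, deletion direction: a bigon; crossings a, b have opposite signs, the over
strand meets a then b, the under strand meets them in either order.\<close>
definition r2_del :: "gcode \<Rightarrow> gcode \<Rightarrow> bool" where
  "r2_del w w' \<longleftrightarrow> (\<exists>x y z a b sa sb P Q. a \<noteq> b \<and> sa \<noteq> sb
      \<and> P = [GL a True sa, GL b True sb]
      \<and> (Q = [GL a False sa, GL b False sb] \<or> Q = [GL b False sb, GL a False sa])
      \<and> (w = x @ P @ y @ Q @ z \<or> w = x @ Q @ y @ P @ z)
      \<and> w' = x @ y @ z \<and> a \<notin> labels w' \<and> b \<notin> labels w')"

text \<open>R3: top strand T passes over middle M (crossing a) and bottom B (crossing b),
M passes over B (crossing c).  The Booleans t, m, bt say whether T meets a before b,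
M meets a before c, B meets b before c; these orders are determined by the signs as
below.\<close>
definition r3 :: "gcode \<Rightarrow> gcode \<Rightarrow> bool" where
  "r3 w w' \<longleftrightarrow> (\<exists>x y z v A B C a b c sa sb sc t m bt.
      distinct [a, b, c]
      \<and> ((t = m) = (sb = sc)) \<and> ((t = bt) = (sa = sc))
      \<and> {A, B, C} =
         {(if t then [GL a True sa, GL b True sb] else [GL b True sb, GL a True sa]),
          (if m then [GL a False sa, GL c True sc] else [GL c True sc, GL a False sa]),
          (if bt then [GL b False sb, GL c False sc] else [GL c False sc, GL b False sb])}
      \<and> w = x @ A @ y @ B @ z @ C @ v
      \<and> w' = x @ rev A @ y @ rev B @ z @ rev C @ v)"

text \<open>One elementary move (including change of base point and renaming of crossings).\<close>
definition gmove :: "gcode \<Rightarrow> gcode \<Rightarrow> bool" where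
  "gmove w w' \<longleftrightarrow> w' = rotate1 w
     \<or> (\<exists>f. inj f \<and> w' = map (\<lambda>l. GL (f (lab l)) (over l) (positive l)) w)
     \<or> r1_del w w' \<or> r2_del w w' \<or> r3 w w'"

definition xchange :: "gcode \<Rightarrow> gcode \<Rightarrow> bool" where
  "xchange w w' \<longleftrightarrow> (\<exists>a \<in> labels w.
     w' = map (\<lambda>l. if lab l = a then GL a (\<not> over l) (\<not> positive l) else l) w)"

inductive reach :: "gcode \<Rightarrow> nat \<Rightarrow> gcode \<Rightarrow> bool" where
  refl: "reach w 0 w"
| move: "gmove w w' \<or> gmove w' w \<Longrightarrow> reach w' k w'' \<Longrightarrow> reach w k w''"
| change: "xchange w w' \<Longrightarrow> reach w' k w'' \<Longrightarrow> reach w (Suc k) w''"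

text \<open>Virtual unknotting number (infinity if not virtually null-homotopic); the unknot
is the empty Gauss code.\<close>
definition vu :: "gcode \<Rightarrow> enat" where
  "vu D = (INF k \<in> {k. reach D k []}. enat k)"

text \<open>Cl m = sigma_m (strand in position m moves to m+1 passing over);
Vi m = virtual crossing between positions m and m+1.\<close>
datatype bletter = Cl nat | Vi nat

text \<open>Follow one strand through the braid word, starting in position posn; the crossing
label is the index of the letter in the word.  All sigma_m crossings are positive.\<close>
fun pass :: "bletter list \<Rightarrow> nat \<Rightarrow> nat \<Rightarrow> gcode \<times> nat" where
  "pass [] k posn = ([], posn)"
| "pass (Cl m # w) k posn =
     (if posn = m then (let r = pass w (Suc k) (Suc m) in (GL k True True # fst r, snd r))
      else if posn = Suc m then (let r = pass w (Suc k) m in (GL k False True # fst r, snd r))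
      else pass w (Suc k) posn)"
| "pass (Vi m # w) k posn =
     pass w (Suc k) (if posn = m then Suc m else if posn = Suc m then m else posn)"

fun traverse :: "bletter list \<Rightarrow> nat \<Rightarrow> nat \<Rightarrow> gcode" where
  "traverse w 0 posn = []"
| "traverse w (Suc r) posn = fst (pass w 0 posn) @ traverse w r (snd (pass w 0 posn))"

text \<open>Gauss code of the closure of a braid word on p strands which closes to a knot:
start at position 1 and run through the braid p times.\<close>
definition closure_code :: "nat \<Rightarrow> bletter list \<Rightarrow> gcode" where
  "closure_code p w = traverse w p 1"

text \<open>The braid word (sigma_1 ... sigma_{p-1})^q with the crossings of the first n
blocks replaced by virtual crossings.\<close>
definition VT_braid :: "nat \<Rightarrow> nat \<Rightarrow> nat \<Rightarrow> bletter list" where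
  "VT_braid n p q = concat (map (\<lambda>i. map (if i < n then Vi else Cl) [1..<p]) [0..<q])"

definition VT :: "nat \<Rightarrow> nat \<Rightarrow> nat \<Rightarrow> gcode" where
  "VT n p q = closure_code p (VT_braid n p q)"

end

(* The index of a crossing of a Gauss code is the signed number of passages met on the arc
   from its over- to its under-passage.  The sum of the signs of the crossings of nonzero
   index is invariant under the generalized Reidemeister moves: an R1 crossing has index 0,
   the two crossings of an R2 bigon have equal indices and opposite signs, and R3 preserves
   all indices.  A crossing change only alters the term of the changed crossing, hence
   changes the sum by at most 2, so the sum is a lower bound for 2 vu.

   The (p - 1)(q - n) classical crossings of VT^n_{p,q} are all positive.  Counting the
   passages of the closed strand through the q blocks of the braid, the two passages of a
   crossing are d q steps apart with 0 < d < p, and modulo p a step through a classical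
   block has weight -1 while a step through a virtual block has weight 0.  Hence every index
   is congruent to d n or - d n modulo p, which is nonzero as p and n are coprime. *)

theory Submission
  imports Defs "HOL-Number_Theory.Cong"
begin

section \<open>Chord indices of Gauss codes\<close>

definition passage_weight :: "gletter \<Rightarrow> int" where
  "passage_weight l = (if positive l = over l then 1 else -1)"

definition code_weight :: "gcode \<Rightarrow> int" where
  "code_weight w = sum_list (map passage_weight w)"

definition crossing_sign :: "gletter \<Rightarrow> int" where
  "crossing_sign l = (if positive l then 1 else -1)"

text \<open>For a proper code this is the weight of the arc running from the over- to the
  under-passage of \<open>a\<close> (cyclically), since the whole code has weight 0.\<close>
definition chord_index :: "gcode \<Rightarrow> nat \<Rightarrow> int" where
  "chord_index w a = (case dropWhile (\<lambda>l. lab l \<noteq> a) w of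
       [] \<Rightarrow> 0
     | e # r \<Rightarrow> (if over e then 1 else -1) * code_weight (takeWhile (\<lambda>l. lab l \<noteq> a) r))"

definition writhe_term :: "gcode \<Rightarrow> gletter \<Rightarrow> int" where
  "writhe_term w l = (if over l \<and> chord_index w (lab l) \<noteq> 0 then crossing_sign l else 0)"

definition nonzero_writhe :: "gcode \<Rightarrow> int" where
  "nonzero_writhe w = sum_list (map (writhe_term w) w)"

definition crossing_pair :: "nat \<Rightarrow> gcode \<Rightarrow> bool" where
  "crossing_pair a L \<longleftrightarrow> (\<exists>ov s. L = [GL a ov s, GL a (\<not> ov) s])"

definition proper_code :: "gcode \<Rightarrow> bool" where
  "proper_code w \<longleftrightarrow> (\<forall>a\<in>labels w. crossing_pair a (filter (\<lambda>l. lab l = a) w))"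

lemma code_weight_simps [simp]:
  "code_weight [] = 0" "code_weight (l # w) = passage_weight l + code_weight w"
  "code_weight (u @ w) = code_weight u + code_weight w" "code_weight (rev w) = code_weight w"
  by (auto simp: code_weight_def rev_map [symmetric] sum_list_rev)

lemma code_weight_concat: "code_weight (concat (map f xs)) = (\<Sum>x\<leftarrow>xs. code_weight (f x))"
  by (induction xs) auto

lemma labels_simps [simp]:
  "labels [] = {}" "labels (l # w) = insert (lab l) (labels w)"
  "labels (u @ w) = labels u \<union> labels w" "labels (rev w) = labels w"
  by (auto simp: labels_def)

lemma finite_labels [simp]: "finite (labels w)"
  by (simp add: labels_def)

lemma notin_labels_iff: "a \<notin> labels w \<longleftrightarrow> (\<forall>l\<in>set w. lab l \<noteq> a)"
  by (auto simp: labels_def)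

lemma notin_labels_iff_filter: "a \<notin> labels w \<longleftrightarrow> filter (\<lambda>l. lab l = a) w = []"
  by (auto simp: labels_def filter_empty_conv)

lemma filter_label_eq_singleton:
  assumes "filter (\<lambda>l. lab l = a) w = [e]"
  obtains y z where "w = y @ e # z" "a \<notin> labels y" "a \<notin> labels z"
proof -
  from filter_eq_ConsD [OF assms] obtain y z
    where "w = y @ e # z" "\<forall>l\<in>set y. lab l \<noteq> a" "filter (\<lambda>l. lab l = a) z = []"
    by auto
  then show ?thesis
    by (intro that [of y z]) (auto simp: notin_labels_iff filter_empty_conv)
qed

lemma filter_label_eq_pair:
  assumes "filter (\<lambda>l. lab l = a) w = [e1, e2]"
  obtains x y z where "w = x @ e1 # y @ e2 # z" "a \<notin> labels x" "a \<notin> labels y" "a \<notin> labels z"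
proof -
  from filter_eq_ConsD [OF assms] obtain x u
    where "w = x @ e1 # u" "\<forall>l\<in>set x. lab l \<noteq> a" "filter (\<lambda>l. lab l = a) u = [e2]"
    by auto
  moreover obtain y z where "u = y @ e2 # z" "a \<notin> labels y" "a \<notin> labels z"
    using filter_label_eq_singleton [OF \<open>filter (\<lambda>l. lab l = a) u = [e2]\<close>] .
  ultimately show ?thesis
    by (intro that [of x y z]) (auto simp: notin_labels_iff)
qed

lemma sum_list_by_label:
  assumes "finite S" "labels w \<subseteq> S"
  shows "(\<Sum>l\<leftarrow>w. f l) = (\<Sum>a\<in>S. \<Sum>l\<leftarrow>filter (\<lambda>l. lab l = a) w. f l)"
  using assms(2)
proof (induction w)
  case (Cons l w)
  have "(\<Sum>a\<in>S. \<Sum>l'\<leftarrow>filter (\<lambda>l'. lab l' = a) (l # w). f l')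
      = (\<Sum>a\<in>S. (if lab l = a then f l else 0) + (\<Sum>l'\<leftarrow>filter (\<lambda>l'. lab l' = a) w. f l'))"
    by (intro sum.cong) auto
  also have "\<dots> = f l + (\<Sum>a\<in>S. \<Sum>l'\<leftarrow>filter (\<lambda>l'. lab l' = a) w. f l')"
    using Cons.prems assms(1) by (simp add: sum.distrib)
  finally show ?case
    using Cons by simp
qed simp

lemma proper_code_weight:
  assumes "proper_code w"
  shows "code_weight w = 0"
proof -
  have "code_weight w = (\<Sum>a\<in>labels w. \<Sum>l\<leftarrow>filter (\<lambda>l. lab l = a) w. passage_weight l)"
    unfolding code_weight_def by (rule sum_list_by_label) auto
  also have "\<dots> = 0"
    using assms by (intro sum.neutral) (auto simp: proper_code_def crossing_pair_def passage_weight_def)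
  finally show ?thesis .
qed

lemma chord_index_split:
  assumes "a \<notin> labels x" "a \<notin> labels y" "lab e1 = a" "lab e2 = a"
  shows "chord_index (x @ e1 # y @ e2 # z) a = (if over e1 then 1 else -1) * code_weight y"
proof -
  have "dropWhile (\<lambda>l. lab l \<noteq> a) (x @ e1 # y @ e2 # z) = e1 # y @ e2 # z"
    using assms by (subst dropWhile_append2) (auto simp: notin_labels_iff)
  moreover have "takeWhile (\<lambda>l. lab l \<noteq> a) (y @ e2 # z) = y"
    using assms by (subst takeWhile_append2) (auto simp: notin_labels_iff)
  ultimately show ?thesis
    by (simp add: chord_index_def)
qed

lemma chord_index_absent: "a \<notin> labels w \<Longrightarrow> chord_index w a = 0"
  by (simp add: chord_index_def notin_labels_iff dropWhile_eq_Nil_conv [THEN iffD2])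

lemma chord_index_replace:
  assumes "a \<notin> labels B" "a \<notin> labels B'" "code_weight B = code_weight B'"
  shows "chord_index (u @ B @ v) a = chord_index (u @ B' @ v) a"
proof (cases "a \<in> labels u")
  case False
  then show ?thesis
    using assms by (simp add: chord_index_def notin_labels_iff)
next
  case True
  then obtain e r where e: "dropWhile (\<lambda>l. lab l \<noteq> a) u = e # r"
    by (cases "dropWhile (\<lambda>l. lab l \<noteq> a) u") (auto simp: dropWhile_eq_Nil_conv labels_def)
  have "dropWhile (\<lambda>l. lab l \<noteq> a) (u @ X) = e # r @ X" for X
    using True e by (auto simp: dropWhile_append labels_def)
  then show ?thesis
    using assms by (simp add: chord_index_def takeWhile_append notin_labels_iff)
qed

section \<open>Invariance under the moves and a lower bound for vu\<close>

lemma rotate1_eq_pair_iff: "rotate1 L = [x, y] \<longleftrightarrow> L = [y, x]"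
  by (cases L) auto

lemma crossing_pair_rotate1: "crossing_pair a (rotate1 L) \<longleftrightarrow> crossing_pair a L"
  unfolding crossing_pair_def rotate1_eq_pair_iff by (auto simp: ex_bool_eq)

lemma filter_rotate1:
  "filter P (rotate1 w) = (if w \<noteq> [] \<and> P (hd w) then rotate1 (filter P w) else filter P w)"
  by (cases w) auto

lemma proper_code_rotate1: "proper_code (rotate1 w) \<longleftrightarrow> proper_code w"
proof -
  have "crossing_pair a (filter (\<lambda>l. lab l = a) (rotate1 w))
      \<longleftrightarrow> crossing_pair a (filter (\<lambda>l. lab l = a) w)" for a
    by (simp add: filter_rotate1 crossing_pair_rotate1 del: rotate1.simps)
  then show ?thesis
    by (simp add: proper_code_def labels_def del: rotate1.simps)
qed

lemma chord_index_rotate1: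
  assumes "proper_code (e # w)"
  shows "chord_index (w @ [e]) a = chord_index (e # w) a"
proof -
  consider "a = lab e" | "a \<noteq> lab e" "a \<in> labels w" | "a \<notin> labels (e # w)"
    by auto
  then show ?thesis
  proof cases
    case 1
    then obtain ov s where "filter (\<lambda>l. lab l = a) (e # w) = [GL a ov s, GL a (\<not> ov) s]"
      using assms by (auto simp: proper_code_def crossing_pair_def)
    then have e: "e = GL a ov s" and f: "filter (\<lambda>l. lab l = a) w = [GL a (\<not> ov) s]"
      using 1 by auto
    obtain y z where w: "w = y @ GL a (\<not> ov) s # z" "a \<notin> labels y" "a \<notin> labels z"
      using filter_label_eq_singleton [OF f] .
    have "code_weight z = - code_weight y"
      using proper_code_weight [OF assms] w e by (simp add: passage_weight_def split: if_splits)
    then show ?thesis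
      using chord_index_split [of a "[]" y e "GL a (\<not> ov) s" z]
        chord_index_split [of a y z "GL a (\<not> ov) s" e "[]"] w e by simp
  next
    case 2
    then obtain ov s where f: "filter (\<lambda>l. lab l = a) w = [GL a ov s, GL a (\<not> ov) s]"
      using assms by (auto simp: proper_code_def crossing_pair_def)
    obtain x y z where "w = x @ GL a ov s # y @ GL a (\<not> ov) s # z"
        "a \<notin> labels x" "a \<notin> labels y" "a \<notin> labels z"
      using filter_label_eq_pair [OF f] .
    then show ?thesis
      using chord_index_split [of a "e # x" y "GL a ov s" "GL a (\<not> ov) s" z]
        chord_index_split [of a x y "GL a ov s" "GL a (\<not> ov) s" "z @ [e]"] 2 by simp
  next
    case 3
    then show ?thesis
      by (simp add: chord_index_absent)
  qed
qed

lemma nonzero_writhe_rotate1: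
  assumes "proper_code w"
  shows "nonzero_writhe (rotate1 w) = nonzero_writhe w"
proof (cases w)
  case (Cons e w')
  have "writhe_term (w' @ [e]) = writhe_term (e # w')"
    using chord_index_rotate1 [of e w'] assms Cons by (auto simp: writhe_term_def fun_eq_iff)
  then show ?thesis
    using Cons by (simp add: nonzero_writhe_def add.commute)
qed simp

lemma code_weight_map:
  "(\<And>l. passage_weight (g l) = passage_weight l) \<Longrightarrow> code_weight (map g w) = code_weight w"
  by (induction w) auto

lemma chord_index_map:
  assumes lab: "\<And>l. lab (g l) = b \<longleftrightarrow> lab l = a"
    and weight: "\<And>l. passage_weight (g l) = passage_weight l"
    and over: "\<And>l. lab l = a \<Longrightarrow> over (g l) = over l"
  shows "chord_index (map g w) b = chord_index w a"
proof -
  have P: "(\<lambda>l. lab l \<noteq> b) \<circ> g = (\<lambda>l. lab l \<noteq> a)"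
    using lab by (auto simp: fun_eq_iff)
  show ?thesis
  proof (cases "dropWhile (\<lambda>l. lab l \<noteq> a) w")
    case Nil
    then show ?thesis
      by (simp add: chord_index_def dropWhile_map P del: dropWhile_eq_Nil_conv)
  next
    case (Cons e r)
    then have "lab e = a"
      using hd_dropWhile [of "\<lambda>l. lab l \<noteq> a" w] by auto
    then show ?thesis
      using Cons
      by (simp add: chord_index_def dropWhile_map takeWhile_map P code_weight_map weight over)
  qed
qed

definition relabel :: "(nat \<Rightarrow> nat) \<Rightarrow> gletter \<Rightarrow> gletter" where
  "relabel f l = GL (f (lab l)) (over l) (positive l)"

lemma inj_relabel: "inj f \<Longrightarrow> inj (relabel f)"
  by (auto intro!: injI gletter.expand simp: relabel_def inj_eq)

lemma proper_code_relabel: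
  assumes "inj f"
  shows "proper_code (map (relabel f) w) \<longleftrightarrow> proper_code w"
proof -
  have filter: "filter (\<lambda>l. lab l = f a) (map (relabel f) w) = map (relabel f) (filter (\<lambda>l. lab l = a) w)" for a
    using assms by (induction w) (auto simp: relabel_def inj_eq)
  have pair: "[GL (f a) ov s, GL (f a) (\<not> ov) s] = map (relabel f) [GL a ov s, GL a (\<not> ov) s]" for a ov s
    by (simp add: relabel_def)
  have "crossing_pair (f a) (map (relabel f) L) \<longleftrightarrow> crossing_pair a L" for a L
    unfolding crossing_pair_def pair inj_map_eq_map [OF inj_relabel [OF assms]] ..
  moreover have "labels (map (relabel f) w) = f ` labels w"
    by (simp add: labels_def relabel_def image_image)
  ultimately show ?thesis
    by (simp add: proper_code_def filter)
qed

lemma nonzero_writhe_relabel: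
  assumes "inj f"
  shows "nonzero_writhe (map (relabel f) w) = nonzero_writhe w"
proof -
  have "chord_index (map (relabel f) w) (f a) = chord_index w a" for a
    using assms by (intro chord_index_map) (auto simp: relabel_def passage_weight_def inj_eq)
  then have "writhe_term (map (relabel f) w) (relabel f l) = writhe_term w l" for l
    by (simp add: writhe_term_def crossing_sign_def relabel_def)
  then show ?thesis
    by (simp add: nonzero_writhe_def comp_def)
qed

lemma r1_del_invariants:
  assumes "r1_del w w'"
  shows "(proper_code w \<longleftrightarrow> proper_code w') \<and> nonzero_writhe w = nonzero_writhe w'"
proof -
  obtain x y a ov s where w: "w = x @ [GL a ov s, GL a (\<not> ov) s] @ y" and w': "w' = x @ y"
    and a: "a \<notin> labels w'"
    using assms unfolding r1_del_def by (elim exE conjE) (rule that; assumption)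
  show ?thesis
  proof
    have "filter (\<lambda>l. lab l = a) w = [GL a ov s, GL a (\<not> ov) s]"
      using w w' a by (simp add: notin_labels_iff_filter)
    moreover have "filter (\<lambda>l. lab l = b) w = filter (\<lambda>l. lab l = b) w'" if "b \<in> labels w'" for b
      using w w' a that by auto
    moreover have "labels w = insert a (labels w')"
      using w w' by auto
    ultimately show "proper_code w \<longleftrightarrow> proper_code w'"
      by (simp add: proper_code_def crossing_pair_def)
    have "chord_index w a = 0"
      using chord_index_split [of a x "[]" "GL a ov s" "GL a (\<not> ov) s" y] w w' a by simp
    moreover have "chord_index w b = chord_index w' b" if "b \<noteq> a" for b
      using chord_index_replace [of b "[GL a ov s, GL a (\<not> ov) s]" "[]" x y] w w' that
      by (simp add: passage_weight_def)
    moreover have "l \<in> set x \<or> l \<in> set y \<Longrightarrow> lab l \<noteq> a" for l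
      using a w' by (auto simp: notin_labels_iff)
    ultimately show "nonzero_writhe w = nonzero_writhe w'"
      using w w' by (simp add: nonzero_writhe_def writhe_term_def cong: map_cong)
  qed
qed

lemma r2_chord_index_eq:
  assumes "a \<noteq> b" "sa \<noteq> sb" "P = [GL a True sa, GL b True sb]"
    "Q = [GL a False sa, GL b False sb] \<or> Q = [GL b False sb, GL a False sa]"
    "w = x @ P @ y @ Q @ z \<or> w = x @ Q @ y @ P @ z"
    "a \<notin> labels (x @ y @ z)" "b \<notin> labels (x @ y @ z)"
  shows "chord_index w a = chord_index w b"
  using assms unfolding notin_labels_iff
  by (auto simp: chord_index_def dropWhile_append takeWhile_append passage_weight_def)

lemma r2_del_invariants:
  assumes "r2_del w w'"
  shows "(proper_code w \<longleftrightarrow> proper_code w') \<and> nonzero_writhe w = nonzero_writhe w'"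
proof -
  obtain x y z a b sa sb P Q where ab: "a \<noteq> b" "sa \<noteq> sb" and P: "P = [GL a True sa, GL b True sb]"
    and Q: "Q = [GL a False sa, GL b False sb] \<or> Q = [GL b False sb, GL a False sa]"
    and w: "w = x @ P @ y @ Q @ z \<or> w = x @ Q @ y @ P @ z"
    and w': "w' = x @ y @ z" and a: "a \<notin> labels w'" and b: "b \<notin> labels w'"
    using assms unfolding r2_del_def by (elim exE conjE) (rule that; assumption)
  show ?thesis
  proof
    have "crossing_pair a (filter (\<lambda>l. lab l = a) w)" "crossing_pair b (filter (\<lambda>l. lab l = b) w)"
      using w w' P Q ab a b by (auto simp: crossing_pair_def notin_labels_iff_filter)
    moreover have "filter (\<lambda>l. lab l = c) w = filter (\<lambda>l. lab l = c) w'" if "c \<in> labels w'" for c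
      using w w' P Q a b that by auto
    moreover have "labels w = insert a (insert b (labels w'))"
      using w w' P Q by auto
    ultimately show "proper_code w \<longleftrightarrow> proper_code w'"
      by (simp add: proper_code_def)
    have "chord_index w d = chord_index w' d" if "d \<noteq> a" "d \<noteq> b" for d
    proof -
      have "d \<notin> labels P" "d \<notin> labels Q" "code_weight P = 0" "code_weight Q = 0"
        using P Q ab that by (auto simp: passage_weight_def)
      then have "chord_index (u @ P @ v) d = chord_index (u @ v) d"
        "chord_index (u @ Q @ v) d = chord_index (u @ v) d" for u v
        using chord_index_replace [of d P "[]" u v] chord_index_replace [of d Q "[]" u v] by simp_all
      then show ?thesis
        using w w' by (metis append.assoc)
    qed
    moreover have "(\<Sum>l\<leftarrow>P. writhe_term w l) = 0" "(\<Sum>l\<leftarrow>Q. writhe_term w l) = 0"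
      using P Q ab r2_chord_index_eq [OF ab P Q w] a b w'
      by (auto simp: writhe_term_def crossing_sign_def)
    moreover have "l \<in> set x \<or> l \<in> set y \<or> l \<in> set z \<Longrightarrow> lab l \<noteq> a \<and> lab l \<noteq> b" for l
      using a b w' by (auto simp: notin_labels_iff)
    ultimately show "nonzero_writhe w = nonzero_writhe w'"
      using w w' by (auto simp: nonzero_writhe_def writhe_term_def cong: map_cong)
  qed
qed

text \<open>Reversing the two segments moves their non-\<open>d\<close> passages across the ends of the arc
  of \<open>d\<close>; the last hypothesis says that the two weight changes cancel.\<close>
lemma chord_index_rev_two_segments:
  assumes "S = (if f then [e, u] else [u, e])" "S' = (if f' then [e', u'] else [u', e'])"
    and "lab e = d" "lab e' = d" "lab u \<noteq> d" "lab u' \<noteq> d" "d \<notin> labels X" "d \<notin> labels X'"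
    and "(if f then passage_weight u else - passage_weight u)
       = (if f' then passage_weight u' else - passage_weight u')"
  shows "chord_index (X @ S @ X' @ S' @ X'') d = chord_index (X @ rev S @ X' @ rev S' @ X'') d"
  using assms
  by (cases f; cases f') (auto simp: chord_index_def dropWhile_append takeWhile_append notin_labels_iff)

lemma chord_index_rev_three_segments:
  assumes S: "S = (if f then [e, u] else [u, e])" and S': "S' = (if f' then [e', u'] else [u', e'])"
    and d: "lab e = d" "lab e' = d" "lab u \<noteq> d" "lab u' \<noteq> d"
    and free: "d \<notin> labels R" "d \<notin> labels x" "d \<notin> labels y" "d \<notin> labels z"
    and balance: "(if f then passage_weight u else - passage_weight u)
       = (if f' then passage_weight u' else - passage_weight u')"
    and perm: "(A, B, C) \<in> {(S, S', R), (S, R, S'), (S', S, R), (S', R, S), (R, S, S'), (R, S', S)}"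
  shows "chord_index (x @ A @ y @ B @ z @ C @ v) d = chord_index (x @ rev A @ y @ rev B @ z @ rev C @ v) d"
proof -
  have R: "chord_index (X @ rev R @ X') d = chord_index (X @ R @ X') d" for X X'
    using chord_index_replace [of d "rev R" R X X'] free by simp
  have SS': "chord_index (X @ S @ X' @ S' @ X'') d = chord_index (X @ rev S @ X' @ rev S' @ X'') d"
    and S'S: "chord_index (X @ S' @ X' @ S @ X'') d = chord_index (X @ rev S' @ X' @ rev S @ X'') d"
    if "d \<notin> labels X" "d \<notin> labels X'" for X X' X''
    using chord_index_rev_two_segments [OF S S' d that balance]
      chord_index_rev_two_segments [OF S' S d(2,1,4,3) that balance [symmetric]] by simp_all
  from perm consider "A = S" "B = S'" "C = R" | "A = S" "B = R" "C = S'" | "A = S'" "B = S" "C = R"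
    | "A = S'" "B = R" "C = S" | "A = R" "B = S" "C = S'" | "A = R" "B = S'" "C = S"
    by auto
  then show ?thesis
  proof cases
    case 1
    then show ?thesis
      using SS' [of x y "z @ R @ v"] R [of "x @ rev S @ y @ rev S' @ z" v] free by simp
  next
    case 2
    then show ?thesis
      using SS' [of x "y @ R @ z" v] R [of "x @ rev S @ y" "z @ rev S' @ v"] free by simp
  next
    case 3
    then show ?thesis
      using S'S [of x y "z @ R @ v"] R [of "x @ rev S' @ y @ rev S @ z" v] free by simp
  next
    case 4
    then show ?thesis
      using S'S [of x "y @ R @ z" v] R [of "x @ rev S' @ y" "z @ rev S @ v"] free by simp
  next
    case 5
    then show ?thesis
      using SS' [of "x @ R @ y" z v] R [of x "y @ rev S @ z @ rev S' @ v"] free by simp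
  next
    case 6
    then show ?thesis
      using S'S [of "x @ R @ y" z v] R [of x "y @ rev S' @ z @ rev S @ v"] free by simp
  qed
qed

lemma chord_index_rev_free_segments:
  assumes "d \<notin> labels A" "d \<notin> labels B" "d \<notin> labels C"
  shows "chord_index (x @ rev A @ y @ rev B @ z @ rev C @ v) d = chord_index (x @ A @ y @ B @ z @ C @ v) d"
  using assms chord_index_replace [of d "rev A" A x "y @ rev B @ z @ rev C @ v"]
    chord_index_replace [of d "rev B" B "x @ A @ y" "z @ rev C @ v"]
    chord_index_replace [of d "rev C" C "x @ A @ y @ B @ z" v]
  by simp

lemma insert3_eq_imp_permutation:
  assumes "X \<noteq> Y" "Y \<noteq> Z" "X \<noteq> Z" "{A, B, C} = {X, Y, Z}"
  shows "(A, B, C) \<in> {(X, Y, Z), (X, Z, Y), (Y, X, Z), (Y, Z, X), (Z, X, Y), (Z, Y, X)}"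
proof -
  have "A = X \<or> A = Y \<or> A = Z" "B = X \<or> B = Y \<or> B = Z" "C = X \<or> C = Y \<or> C = Z"
    "X = A \<or> X = B \<or> X = C" "Y = A \<or> Y = B \<or> Y = C" "Z = A \<or> Z = B \<or> Z = C"
    using assms(4) by blast+
  then show ?thesis
    using assms(1-3)
    by (elim disjE [of "A = X"] disjE [of "A = Y"] disjE [of "B = X"] disjE [of "B = Y"]
        disjE [of "C = X"] disjE [of "C = Y"]) simp_all
qed

text \<open>Each of \<open>a\<close>, \<open>b\<close>, \<open>c\<close> has its two passages in two of the three segments, and the
  sign constraints of R3 are exactly the balance condition of the previous lemma.\<close>
lemma r3_chord_index:
  assumes dist: "distinct [a, b, c]" and s1: "(t = m) = (sb = sc)" and s2: "(t = bt) = (sa = sc)"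
    and T: "T = (if t then [GL a True sa, GL b True sb] else [GL b True sb, GL a True sa])"
    and M: "M = (if m then [GL a False sa, GL c True sc] else [GL c True sc, GL a False sa])"
    and Bt: "Bt = (if bt then [GL b False sb, GL c False sc] else [GL c False sc, GL b False sb])"
    and perm: "(A, B, C) \<in> {(T, M, Bt), (T, Bt, M), (M, T, Bt), (M, Bt, T), (Bt, T, M), (Bt, M, T)}"
    and free: "\<And>e. e \<in> {a, b, c} \<Longrightarrow> e \<notin> labels x \<and> e \<notin> labels y \<and> e \<notin> labels z"
  shows "chord_index (x @ A @ y @ B @ z @ C @ v) d = chord_index (x @ rev A @ y @ rev B @ z @ rev C @ v) d"
proof -
  consider "d = a" | "d = b" | "d = c" | "d \<notin> {a, b, c}"
    by auto
  then show ?thesis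
  proof cases
    case 1
    have "a \<notin> labels Bt" "a \<notin> labels x" "a \<notin> labels y" "a \<notin> labels z"
      using Bt dist free [of a] by auto
    then show ?thesis
      unfolding 1 using perm
      by (intro chord_index_rev_three_segments [OF T M, where R = Bt])
        (use dist s1 in \<open>auto simp: passage_weight_def\<close>)
  next
    case 2
    have T': "T = (if \<not> t then [GL b True sb, GL a True sa] else [GL a True sa, GL b True sb])"
      using T by simp
    have "b \<notin> labels M" "b \<notin> labels x" "b \<notin> labels y" "b \<notin> labels z"
      using M dist free [of b] by auto
    moreover have "(A, B, C) \<in> {(T, Bt, M), (T, M, Bt), (Bt, T, M), (Bt, M, T), (M, T, Bt), (M, Bt, T)}"
      using perm by blast
    ultimately show ?thesis
      unfolding 2
      by (intro chord_index_rev_three_segments [OF T' Bt, where R = M])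
        (use dist s2 in \<open>auto simp: passage_weight_def\<close>)
  next
    case 3
    have M': "M = (if \<not> m then [GL c True sc, GL a False sa] else [GL a False sa, GL c True sc])"
      and Bt': "Bt = (if \<not> bt then [GL c False sc, GL b False sb] else [GL b False sb, GL c False sc])"
      using M Bt by simp_all
    have "c \<notin> labels T" "c \<notin> labels x" "c \<notin> labels y" "c \<notin> labels z"
      using T dist free [of c] by auto
    moreover have "(A, B, C) \<in> {(M, Bt, T), (M, T, Bt), (Bt, M, T), (Bt, T, M), (T, M, Bt), (T, Bt, M)}"
      using perm by blast
    ultimately show ?thesis
      unfolding 3
      by (intro chord_index_rev_three_segments [OF M' Bt', where R = T])
        (use dist s1 s2 in \<open>auto simp: passage_weight_def\<close>)
  next
    case 4
    then have "d \<notin> labels X" if "X \<in> {T, M, Bt}" for X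
      using that T M Bt by (auto split: if_split_asm)
    moreover have "A \<in> {T, M, Bt}" "B \<in> {T, M, Bt}" "C \<in> {T, M, Bt}"
      using perm by auto
    ultimately have "d \<notin> labels A" "d \<notin> labels B" "d \<notin> labels C"
      by simp_all
    then show ?thesis
      by (rule chord_index_rev_free_segments [symmetric])
  qed
qed

lemma proper_code_notin_outside:
  assumes "proper_code w" "w = x @ A @ y @ B @ z @ C @ v"
    and "length (filter (\<lambda>l. lab l = e) (A @ B @ C)) = 2"
  shows "e \<notin> labels x \<and> e \<notin> labels y \<and> e \<notin> labels z"
proof -
  have "filter (\<lambda>l. lab l = e) (A @ B @ C) \<noteq> []"
    using assms(3) by auto
  then have "e \<in> labels (A @ B @ C)"
    by (metis notin_labels_iff_filter)
  then have "e \<in> labels w"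
    using assms(2) by auto
  then have "length (filter (\<lambda>l. lab l = e) w) = 2"
    using assms(1) by (auto simp: proper_code_def crossing_pair_def)
  then show ?thesis
    using assms(2,3) by (simp add: notin_labels_iff_filter flip: length_0_conv)
qed

lemma r3_invariants:
  assumes "r3 w w'"
  shows "(proper_code w \<longleftrightarrow> proper_code w')
    \<and> (proper_code w \<longrightarrow> nonzero_writhe w = nonzero_writhe w')"
proof -
  obtain x y z v A B C a b c sa sb sc t m bt where dist: "distinct [a, b, c]"
    and s1: "(t = m) = (sb = sc)" and s2: "(t = bt) = (sa = sc)"
    and ABC: "{A, B, C} =
         {(if t then [GL a True sa, GL b True sb] else [GL b True sb, GL a True sa]),
          (if m then [GL a False sa, GL c True sc] else [GL c True sc, GL a False sa]),
          (if bt then [GL b False sb, GL c False sc] else [GL c False sc, GL b False sb])}"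
    and w: "w = x @ A @ y @ B @ z @ C @ v" and w': "w' = x @ rev A @ y @ rev B @ z @ rev C @ v"
    using assms unfolding r3_def by (elim exE conjE) (rule that; assumption)
  define T where "T = (if t then [GL a True sa, GL b True sb] else [GL b True sb, GL a True sa])"
  define M where "M = (if m then [GL a False sa, GL c True sc] else [GL c True sc, GL a False sa])"
  define Bt where "Bt = (if bt then [GL b False sb, GL c False sc] else [GL c False sc, GL b False sb])"
  have "GL a False sa \<in> set M - set T" "GL c True sc \<in> set M - set Bt" "GL b False sb \<in> set Bt - set T"
    by (auto simp: T_def M_def Bt_def)
  then have "T \<noteq> M" "M \<noteq> Bt" "T \<noteq> Bt"
    by auto
  then have perm: "(A, B, C) \<in> {(T, M, Bt), (T, Bt, M), (M, T, Bt), (M, Bt, T), (Bt, T, M), (Bt, M, T)}"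
    using ABC unfolding T_def [symmetric] M_def [symmetric] Bt_def [symmetric]
    by (rule insert3_eq_imp_permutation)
  show ?thesis
  proof (intro conjI impI)
    have "filter (\<lambda>l. lab l = e) (rev X) = filter (\<lambda>l. lab l = e) X" if "X \<in> {T, M, Bt}" for X e
      using that dist by (auto simp: T_def M_def Bt_def)
    moreover have "A \<in> {T, M, Bt}" "B \<in> {T, M, Bt}" "C \<in> {T, M, Bt}"
      using perm by auto
    ultimately have "filter (\<lambda>l. lab l = e) w' = filter (\<lambda>l. lab l = e) w" for e
      using w w' by simp
    moreover have "labels w' = labels w"
      using w w' by simp
    ultimately show "proper_code w \<longleftrightarrow> proper_code w'"
      by (simp add: proper_code_def)
    assume proper: "proper_code w"
    have "e \<notin> labels x \<and> e \<notin> labels y \<and> e \<notin> labels z" if "e \<in> {a, b, c}" for e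
    proof (rule proper_code_notin_outside [OF proper w])
      have "length (filter (\<lambda>l. lab l = e) (A @ B @ C)) = length (filter (\<lambda>l. lab l = e) (T @ M @ Bt))"
        using perm by auto
      also have "\<dots> = 2"
        using that dist by (auto simp: T_def M_def Bt_def)
      finally show "length (filter (\<lambda>l. lab l = e) (A @ B @ C)) = 2" .
    qed
    then have "chord_index w d = chord_index w' d" for d
      unfolding w w' by (rule r3_chord_index [OF dist s1 s2 T_def M_def Bt_def perm])
    then have "writhe_term w' = writhe_term w"
      by (simp add: writhe_term_def fun_eq_iff)
    then show "nonzero_writhe w = nonzero_writhe w'"
      using w w' by (simp add: nonzero_writhe_def rev_map [symmetric] sum_list_rev)
  qed
qed

definition flip_at :: "nat \<Rightarrow> gletter \<Rightarrow> gletter" where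
  "flip_at a l = (if lab l = a then GL a (\<not> over l) (\<not> positive l) else l)"

lemma lab_flip_at [simp]: "lab (flip_at a l) = lab l"
  by (simp add: flip_at_def)

lemma proper_code_flip_at:
  assumes "proper_code w"
  shows "proper_code (map (flip_at a) w)"
proof -
  have "crossing_pair b (map (flip_at a) L)" if "crossing_pair b L" for b L
    using that by (auto simp: crossing_pair_def flip_at_def)
  then show ?thesis
    using assms by (simp add: proper_code_def labels_def filter_map comp_def image_image)
qed

lemma writhe_term_pair_bound:
  "\<bar>writhe_term w (GL a ov s) + writhe_term w (GL a (\<not> ov) s)\<bar> \<le> 1"
  by (cases ov) (auto simp: writhe_term_def crossing_sign_def)

text \<open>A crossing change only affects the contribution of the crossing itself, as it
  preserves all passage weights.\<close>
lemma nonzero_writhe_flip_at: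
  assumes "proper_code w" "a \<in> labels w"
  shows "\<bar>nonzero_writhe (map (flip_at a) w) - nonzero_writhe w\<bar> \<le> 2"
proof -
  define w' where "w' = map (flip_at a) w"
  define \<delta> where "\<delta> l = writhe_term w' (flip_at a l) - writhe_term w l" for l
  obtain ov s where pair: "filter (\<lambda>l. lab l = a) w = [GL a ov s, GL a (\<not> ov) s]"
    using assms by (auto simp: proper_code_def crossing_pair_def)
  have "chord_index w' b = chord_index w b" if "b \<noteq> a" for b
    unfolding w'_def using that by (intro chord_index_map) (auto simp: flip_at_def passage_weight_def)
  then have \<delta>_zero: "\<delta> l = 0" if "lab l \<noteq> a" for l
    using that by (simp add: \<delta>_def writhe_term_def flip_at_def)
  have "nonzero_writhe w' - nonzero_writhe w = (\<Sum>l\<leftarrow>w. \<delta> l)"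
    by (simp add: nonzero_writhe_def w'_def \<delta>_def sum_list_subtractf comp_def)
  also have "\<dots> = (\<Sum>l\<leftarrow>filter (\<lambda>l. lab l = a) w. \<delta> l)"
    by (rule sum_list_map_filter [symmetric]) (use \<delta>_zero in auto)
  also have "\<dots> = (writhe_term w' (GL a (\<not> ov) (\<not> s)) + writhe_term w' (GL a ov (\<not> s)))
      - (writhe_term w (GL a ov s) + writhe_term w (GL a (\<not> ov) s))"
    by (simp add: pair \<delta>_def flip_at_def)
  finally show ?thesis
    using writhe_term_pair_bound [of w' a "\<not> ov" "\<not> s"] writhe_term_pair_bound [of w a ov s]
    by (simp add: w'_def)
qed

lemma gmove_invariants:
  assumes "gmove w w'"
  shows "(proper_code w \<longleftrightarrow> proper_code w') \<and> (proper_code w \<longrightarrow> nonzero_writhe w = nonzero_writhe w')"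
proof -
  from assms consider "w' = rotate1 w" | f where "inj f" "w' = map (relabel f) w"
    | "r1_del w w'" | "r2_del w w'" | "r3 w w'"
    unfolding gmove_def relabel_def [abs_def] by blast
  then show ?thesis
  proof cases
    case 1
    then show ?thesis
      using proper_code_rotate1 nonzero_writhe_rotate1 by simp
  next
    case 2
    then show ?thesis
      using proper_code_relabel nonzero_writhe_relabel by simp
  next
    case 3
    then show ?thesis
      using r1_del_invariants by simp
  next
    case 4
    then show ?thesis
      using r2_del_invariants by simp
  next
    case 5
    then show ?thesis
      by (rule r3_invariants)
  qed
qed

lemma reach_nonzero_writhe:
  assumes "reach w k w'" "proper_code w"
  shows "proper_code w' \<and> \<bar>nonzero_writhe w - nonzero_writhe w'\<bar> \<le> 2 * int k"
  using assms
proof (induction rule: reach.induct)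
  case (move w w' k w'')
  then have "proper_code w'" "nonzero_writhe w = nonzero_writhe w'"
    using gmove_invariants [of w w'] gmove_invariants [of w' w] by auto
  then show ?case
    using move.IH by simp
next
  case (change w w' k w'')
  then obtain a where "a \<in> labels w" "w' = map (flip_at a) w"
    by (auto simp: xchange_def flip_at_def [abs_def])
  then have "proper_code w'" "\<bar>nonzero_writhe w' - nonzero_writhe w\<bar> \<le> 2"
    using proper_code_flip_at nonzero_writhe_flip_at change.prems by blast+
  then show ?case
    using change.IH by auto
qed simp

lemma vu_lower_bound:
  assumes "proper_code w" "int m \<le> nonzero_writhe w"
  shows "enat m \<le> 2 * vu w"
proof -
  have "enat ((m + 1) div 2) \<le> vu w"
    unfolding vu_def
  proof (rule INF_greatest)
    fix k
    assume "k \<in> {k. reach w k []}"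
    then have "m \<le> 2 * k"
      using reach_nonzero_writhe [of w k "[]"] assms by (simp add: nonzero_writhe_def)
    then show "enat ((m + 1) div 2) \<le> enat k"
      by simp
  qed
  then have "2 * enat ((m + 1) div 2) \<le> 2 * vu w"
    by (simp add: mult_left_mono)
  moreover have "enat m \<le> 2 * enat ((m + 1) div 2)"
    by (simp add: numeral_eq_enat)
  ultimately show ?thesis
    by (rule order_trans [rotated])
qed

section \<open>The Gauss code of VT\<close>

lemma pass_append:
  "pass (u @ v) k P = (let r = pass u k P; r' = pass v (k + length u) (snd r) in (fst r @ fst r', snd r'))"
proof (induction u arbitrary: k P)
  case (Cons a u)
  then show ?case
    by (cases a) (simp_all add: Let_def)
qed simp

lemma pass_Cl_upt:
  assumes "1 \<le> j"
  shows "pass (map Cl [j..<p]) k P =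
    (if P = j \<and> j < p then (map (\<lambda>m. GL (k + m) True True) [0..<p - j], p)
     else if j < P \<and> P \<le> p then ([GL (k + (P - 1 - j)) False True], P - 1)
     else ([], P))"
  using assms
proof (induction "p - j" arbitrary: j k P)
  case (Suc r)
  then have "[j..<p] = j # [Suc j..<p]" and "[0..<p - j] = 0 # [1..<p - j]"
    by (simp_all add: upt_conv_Cons)
  moreover have "[1..<p - j] = map Suc [0..<p - Suc j]"
    using Suc.hyps(2) by (simp add: map_Suc_upt Suc_diff_Suc)
  ultimately show ?case
    using Suc by (auto simp: Let_def)
qed simp

lemma pass_Vi_upt:
  assumes "1 \<le> j"
  shows "pass (map Vi [j..<p]) k P =
    ([], if P = j \<and> j < p then p else if j < P \<and> P \<le> p then P - 1 else P)"
  using assms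
proof (induction "p - j" arbitrary: j k P)
  case (Suc r)
  then have "[j..<p] = j # [Suc j..<p]"
    by (simp add: upt_conv_Cons)
  then show ?case
    using Suc by auto
qed simp

text \<open>The closed strand runs \<open>p\<close> times through the braid, i.e. through \<open>p * q\<close> blocks;
  it enters its \<open>T\<close>-th block at this position.  Every \<open>p\<close>-th time it enters at position 1
  and is the overstrand of the block.\<close>
definition strand_pos :: "nat \<Rightarrow> nat \<Rightarrow> nat" where
  "strand_pos p T = (if T mod p = 0 then 1 else p + 1 - T mod p)"

lemma strand_pos_Suc:
  assumes "2 \<le> p"
  shows "strand_pos p (Suc T) = (if strand_pos p T = 1 then p else strand_pos p T - 1)"
proof -
  consider "T mod p = 0" | "0 < T mod p" "Suc (T mod p) < p" | "Suc (T mod p) = p"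
    using assms mod_less_divisor [of p T] by linarith
  then show ?thesis
  proof cases
    case 1
    then have "Suc T mod p = 1"
      using assms by (simp add: mod_Suc)
    then show ?thesis
      using 1 assms by (simp add: strand_pos_def)
  next
    case 2
    then have "Suc T mod p = Suc (T mod p)"
      by (simp add: mod_Suc)
    then show ?thesis
      using 2 assms by (simp add: strand_pos_def)
  next
    case 3
    then have "Suc T mod p = 0"
      by (simp add: mod_Suc)
    then show ?thesis
      using 3 assms by (simp add: strand_pos_def)
  qed
qed

text \<open>Crossing \<open>j < p - 1\<close> of block \<open>i\<close> is the letter \<open>i * (p - 1) + j\<close> of the braid word,
  which is its label in the Gauss code.\<close>
definition block_code :: "nat \<Rightarrow> nat \<Rightarrow> nat \<Rightarrow> nat \<Rightarrow> gcode" where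
  "block_code n p i T = (if i < n then []
     else if T mod p = 0 then map (\<lambda>j. GL (i * (p - 1) + j) True True) [0..<p - 1]
     else [GL (i * (p - 1) + (p - 1 - T mod p)) False True])"

definition step_code :: "nat \<Rightarrow> nat \<Rightarrow> nat \<Rightarrow> nat \<Rightarrow> gcode" where
  "step_code n p q T = block_code n p (T mod q) T"

lemma pass_block:
  assumes "2 \<le> p"
  shows "pass (map (if i < n then Vi else Cl) [1..<p]) (i * (p - 1)) (strand_pos p T)
    = (block_code n p i T, strand_pos p (Suc T))"
proof (cases "i < n")
  case True
  have "T mod p < p"
    using assms by simp
  then have "1 \<le> strand_pos p T \<and> strand_pos p T \<le> p"
    by (auto simp: strand_pos_def)
  then show ?thesis
    using True assms pass_Vi_upt [of 1 p "i * (p - 1)" "strand_pos p T"]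
    by (auto simp: block_code_def strand_pos_Suc [OF assms])
next
  case False
  show ?thesis
  proof (cases "T mod p = 0")
    case True
    then have "strand_pos p T = 1" "strand_pos p (Suc T) = p"
      using strand_pos_Suc [OF assms, of T] by (simp_all add: strand_pos_def)
    then show ?thesis
      using True False assms pass_Cl_upt [of 1 p "i * (p - 1)" 1] by (simp add: block_code_def)
  next
    case True': False
    have "T mod p < p"
      using assms by simp
    then have "strand_pos p T = p + 1 - T mod p" "strand_pos p (Suc T) = p - T mod p"
      using True' strand_pos_Suc [OF assms, of T] by (simp_all add: strand_pos_def)
    moreover have "1 < p + 1 - T mod p \<and> p + 1 - T mod p \<le> p"
      using True' \<open>T mod p < p\<close> by linarith
    ultimately show ?thesis
      using True' False pass_Cl_upt [of 1 p "i * (p - 1)" "p + 1 - T mod p"]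
      by (simp add: block_code_def)
  qed
qed

lemma pass_blocks:
  assumes "2 \<le> p" "j \<le> q"
  shows "pass (concat (map (\<lambda>i. map (if i < n then Vi else Cl) [1..<p]) [j..<q])) (j * (p - 1))
      (strand_pos p (B + j))
    = (concat (map (\<lambda>i. block_code n p i (B + i)) [j..<q]), strand_pos p (B + q))"
  using assms(2)
proof (induction "q - j" arbitrary: j)
  case (Suc r)
  then have "[j..<q] = j # [Suc j..<q]"
    by (simp add: upt_conv_Cons)
  moreover have "pass (concat (map (\<lambda>i. map (if i < n then Vi else Cl) [1..<p]) [Suc j..<q]))
      (j * (p - 1) + (p - 1)) (strand_pos p (Suc (B + j)))
    = (concat (map (\<lambda>i. block_code n p i (B + i)) [Suc j..<q]), strand_pos p (B + q))"
    using Suc.hyps(1) [of "Suc j"] Suc.hyps(2) Suc.prems by (simp add: add.commute)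
  ultimately show ?case
    using pass_block [OF assms(1), of j n "B + j"] by (simp add: pass_append Let_def)
qed simp

lemma traverse_VT_braid:
  assumes "2 \<le> p"
  shows "traverse (VT_braid n p q) r (strand_pos p (R * q))
    = concat (map (step_code n p q) [R * q..<(R + r) * q])"
proof (induction r arbitrary: R)
  case (Suc r)
  have "pass (VT_braid n p q) 0 (strand_pos p (R * q))
      = (concat (map (\<lambda>i. block_code n p i (R * q + i)) [0..<q]), strand_pos p (R * q + q))"
    using pass_blocks [OF assms, of 0 q n "R * q"] by (simp add: VT_braid_def)
  moreover have "concat (map (step_code n p q) [R * q..<R * q + q])
      = concat (map (\<lambda>i. block_code n p i (R * q + i)) [0..<q])"
  proof -
    have "[R * q..<R * q + q] = map (\<lambda>i. i + R * q) [0..<q]"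
      by (simp add: map_add_upt add.commute)
    then show ?thesis
      by (auto simp: step_code_def add.commute intro!: arg_cong [where f = concat] map_cong)
  qed
  moreover have "[R * q..<(R + Suc r) * q] = [R * q..<R * q + q] @ [Suc R * q..<(Suc R + r) * q]"
    using upt_add_eq_append [of "R * q" "R * q + q" "q * r"] by (simp add: algebra_simps)
  ultimately show ?case
    using Suc [of "Suc R"] by (simp add: add.commute)
qed simp

lemma VT_eq_concat_step_code:
  assumes "2 \<le> p"
  shows "VT n p q = concat (map (step_code n p q) [0..<p * q])"
  using traverse_VT_braid [OF assms, of n q p 0]
  by (simp add: VT_def closure_code_def strand_pos_def mult.commute)

lemma mult_add_eq_iff_div_mod:
  fixes k :: nat
  assumes "j < k"
  shows "i * k + j = c \<longleftrightarrow> c div k = i \<and> c mod k = j"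
  using assms div_mult_mod_eq [of c k] by (auto simp: ac_simps)

lemma filter_eq_upt: "filter (\<lambda>m. m = x) [a..<b] = (if a \<le> x \<and> x < b then [x] else [])"
  by (induction b) auto

lemma filter_step_code:
  assumes "2 \<le> p" "j < p - 1"
  shows "filter (\<lambda>l. lab l = i * (p - 1) + j) (step_code n p q T) =
    (if T mod q \<noteq> i \<or> i < n then []
     else if T mod p = 0 then [GL (i * (p - 1) + j) True True]
     else if T mod p = p - 1 - j then [GL (i * (p - 1) + j) False True]
     else [])"
proof -
  have label_eq: "i' * (p - 1) + j' = i * (p - 1) + j \<longleftrightarrow> i' = i \<and> j' = j" if "j' < p - 1" for i' j'
    using mult_add_eq_iff_div_mod [OF that] assms(2) by auto
  have "T mod p < p"
    using assms by simp
  moreover have "filter (\<lambda>j'. i' * (p - 1) + j' = i * (p - 1) + j) [0..<p - 1]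
      = (if i' = i then [j] else [])" for i'
  proof -
    have "filter (\<lambda>j'. i' * (p - 1) + j' = i * (p - 1) + j) [0..<p - 1]
        = filter (\<lambda>j'. i' = i \<and> j' = j) [0..<p - 1]"
      using label_eq by (intro filter_cong) auto
    then show ?thesis
      using assms(2) by (simp add: filter_eq_upt)
  qed
  moreover have "i' * (p - 1) + (p - 1 - T mod p) = i * (p - 1) + j \<longleftrightarrow> i' = i \<and> T mod p = p - 1 - j"
    if "0 < T mod p" for i'
  proof -
    have "p - 1 - T mod p < p - 1"
      using that assms(1) by linarith
    then have "i' * (p - 1) + (p - 1 - T mod p) = i * (p - 1) + j \<longleftrightarrow> i' = i \<and> p - 1 - T mod p = j"
      by (rule label_eq)
    moreover have "p - 1 - T mod p = j \<longleftrightarrow> T mod p = p - 1 - j"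
      using that \<open>T mod p < p\<close> assms(2) by (intro iffI) linarith+
    ultimately show ?thesis
      by simp
  qed
  ultimately show ?thesis
    using assms by (auto simp: step_code_def block_code_def filter_map comp_def filter_eq_upt)
qed

lemma concat_map_upt_split:
  assumes "t1 < t2" "t2 < N"
  shows "concat (map g [0..<N]) = concat (map g [0..<t1]) @ g t1 @ concat (map g [Suc t1..<t2])
    @ g t2 @ concat (map g [Suc t2..<N])"
proof -
  have "[0..<N] = [0..<t1] @ t1 # [Suc t1..<t2] @ t2 # [Suc t2..<N]"
    using assms upt_add_eq_append [of 0 t1 "N - t1"] upt_add_eq_append [of "Suc t1" t2 "N - t2"]
    by (simp add: upt_conv_Cons)
  then show ?thesis
    by simp
qed

lemma concat_map_upt_two:
  assumes "t1 < t2" "t2 < N" "\<And>T. T < N \<Longrightarrow> T \<noteq> t1 \<Longrightarrow> T \<noteq> t2 \<Longrightarrow> g T = []"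
  shows "concat (map g [0..<N]) = g t1 @ g t2"
proof -
  have nil: "concat (map g [0..<t1]) = []" "concat (map g [Suc t1..<t2]) = []"
    "concat (map g [Suc t2..<N]) = []"
    using assms by auto
  show ?thesis
    unfolding concat_map_upt_split [OF assms(1,2), of g] nil by simp
qed

lemma step_code_over:
  assumes "T mod q = i" "n \<le> i" "T mod p = 0" "j < p - 1"
  shows "step_code n p q T = map (\<lambda>m. GL (i * (p - 1) + m) True True) [0..<j]
    @ GL (i * (p - 1) + j) True True # map (\<lambda>m. GL (i * (p - 1) + m) True True) [Suc j..<p - 1]"
proof -
  have "[0..<p - 1] = [0..<j] @ j # [Suc j..<p - 1]"
    using assms(4) upt_add_eq_append [of 0 j "p - 1 - j"] by (simp add: upt_conv_Cons)
  then show ?thesis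
    using assms by (simp add: step_code_def block_code_def)
qed

lemma step_code_under:
  assumes "T mod q = i" "n \<le> i" "T mod p = p - 1 - j" "j < p - 1"
  shows "step_code n p q T = [GL (i * (p - 1) + j) False True]"
  using assms by (simp add: step_code_def block_code_def)

lemma positive_VT:
  assumes "2 \<le> p" "l \<in> set (VT n p q)"
  shows "positive l"
  using assms by (auto simp: VT_eq_concat_step_code step_code_def block_code_def split: if_splits)

section \<open>The crossings of VT and their indices\<close>

lemma sum_mod_period:
  fixes f :: "nat \<Rightarrow> 'a::comm_monoid_add"
  shows "(\<Sum>T = a..<a + q. f (T mod q)) = (\<Sum>r<q. f r)"
proof (induction a)
  case 0
  show ?case
    by (rule sum.cong) auto
next
  case (Suc a)
  show ?case
  proof (cases "q = 0")
    case False
    have "(\<Sum>T = Suc a..<Suc (a + q). f (T mod q)) = (\<Sum>T = Suc a..<a + q. f (T mod q)) + f (a mod q)"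
      using False by (simp add: sum.atLeastLessThan_Suc)
    also have "\<dots> = (\<Sum>T = a..<a + q. f (T mod q))"
      using False by (simp add: sum.atLeast_Suc_lessThan add.commute)
    finally show ?thesis
      using Suc by simp
  qed simp
qed

lemma sum_mod_periods:
  fixes f :: "nat \<Rightarrow> 'a::comm_semiring_1"
  shows "(\<Sum>T = a..<a + d * q. f (T mod q)) = of_nat d * (\<Sum>r<q. f r)"
proof (induction d)
  case (Suc d)
  have "{a..<a + Suc d * q} = {a..<a + d * q} \<union> {a + d * q..<a + d * q + q}"
    by (auto simp: algebra_simps)
  then have "(\<Sum>T = a..<a + Suc d * q. f (T mod q))
      = (\<Sum>T = a..<a + d * q. f (T mod q)) + (\<Sum>T = a + d * q..<a + d * q + q. f (T mod q))"
    by (simp add: sum.union_disjoint ivl_disj_int)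
  then show ?case
    using Suc sum_mod_period [where f = f and a = "a + d * q" and q = q] by (simp add: algebra_simps)
qed simp

lemma code_weight_over_letters: "code_weight (map (\<lambda>m. GL (g m) True True) xs) = int (length xs)"
  by (induction xs) (auto simp: passage_weight_def)

lemma code_weight_step_code:
  assumes "1 \<le> p"
  shows "code_weight (step_code n p q T)
    = (if T mod q < n then 0 else if T mod p = 0 then int p - 1 else -1)"
  using assms by (auto simp: step_code_def block_code_def code_weight_over_letters passage_weight_def)

text \<open>Modulo \<open>p\<close> every classical passage through a block has weight \<open>-1\<close>, so over whole
  periods of \<open>q\<close> blocks only the number of classical blocks counts.\<close>
lemma code_weight_steps_cong:
  assumes "1 \<le> p" "n \<le> q"
  shows "[code_weight (concat (map (step_code n p q) [t..<t + d * q])) + int (d * q) = int (d * n)]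
    (mod int p)"
proof -
  have classical_blocks: "(\<Sum>T = t..<t + d * q. if n \<le> T mod q then 1 else 0 :: int) = int d * int (q - n)"
  proof -
    have "{..<q} \<inter> {r. n \<le> r} = {n..<q}"
      by auto
    then show ?thesis
      using sum_mod_periods [where f = "\<lambda>r. if n \<le> r then 1 else 0 :: int" and a = t and d = d and q = q]
      by (simp add: sum.If_cases)
  qed
  have "[code_weight (step_code n p q T) = - (if n \<le> T mod q then 1 else 0)] (mod int p)" for T
    using assms(1) by (auto simp: code_weight_step_code cong_iff_dvd_diff)
  then have "[(\<Sum>T = t..<t + d * q. code_weight (step_code n p q T))
      = (\<Sum>T = t..<t + d * q. - (if n \<le> T mod q then 1 else 0))] (mod int p)"
    by (rule cong_sum)
  then have "[code_weight (concat (map (step_code n p q) [t..<t + d * q])) = - (int d * int (q - n))]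
      (mod int p)"
    by (simp add: code_weight_concat interv_sum_list_conv_sum_set_nat sum_negf classical_blocks)
  then show ?thesis
    using assms(2) by (simp add: cong_iff_dvd_diff of_nat_diff algebra_simps)
qed

lemma notin_labels_concat:
  "(\<And>T. T \<in> set Ts \<Longrightarrow> c \<notin> labels (g T)) \<Longrightarrow> c \<notin> labels (concat (map g Ts))"
  by (induction Ts) auto

lemma chord_index_concat_over_first:
  assumes "t < t'" "t' < N"
    and g: "g t = pre @ GL c True True # post" "g t' = [GL c False True]"
    and free: "c \<notin> labels pre" "c \<notin> labels post"
      "\<And>T. T < N \<Longrightarrow> T \<noteq> t \<Longrightarrow> T \<noteq> t' \<Longrightarrow> c \<notin> labels (g T)"
  shows "chord_index (concat (map g [0..<N])) c
    = code_weight (concat (map g [t..<t'])) - code_weight pre - 1"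
proof -
  have "c \<notin> labels (concat (map g [0..<t]))" "c \<notin> labels (concat (map g [Suc t..<t']))"
    using assms(1,2) by (intro notin_labels_concat free(3); simp)+
  then have "chord_index (concat (map g [0..<N])) c = code_weight (post @ concat (map g [Suc t..<t']))"
    unfolding concat_map_upt_split [OF assms(1,2)] g
    using chord_index_split [of c "concat (map g [0..<t]) @ pre" "post @ concat (map g [Suc t..<t'])"
        "GL c True True" "GL c False True" "concat (map g [Suc t'..<N])"] free(1,2)
    by simp
  moreover have "[t..<t'] = t # [Suc t..<t']"
    using assms(1) by (simp add: upt_conv_Cons)
  ultimately show ?thesis
    using g(1) by (simp add: passage_weight_def)
qed

lemma chord_index_concat_under_first:
  assumes "t' < t" "t < N"
    and g: "g t = pre @ GL c True True # post" "g t' = [GL c False True]"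
    and free: "c \<notin> labels pre" "c \<notin> labels post"
      "\<And>T. T < N \<Longrightarrow> T \<noteq> t \<Longrightarrow> T \<noteq> t' \<Longrightarrow> c \<notin> labels (g T)"
  shows "chord_index (concat (map g [0..<N])) c
    = - (code_weight (concat (map g [t'..<t])) + 1 + code_weight pre)"
proof -
  have "c \<notin> labels (concat (map g [0..<t']))" "c \<notin> labels (concat (map g [Suc t'..<t]))"
    using assms(1,2) by (intro notin_labels_concat free(3); simp)+
  then have "chord_index (concat (map g [0..<N])) c = - code_weight (concat (map g [Suc t'..<t]) @ pre)"
    unfolding concat_map_upt_split [OF assms(1,2)] g
    using chord_index_split [of c "concat (map g [0..<t'])" "concat (map g [Suc t'..<t]) @ pre"
        "GL c False True" "GL c True True" "post @ concat (map g [Suc t..<N])"] free(1)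
    by simp
  moreover have "[t'..<t] = t' # [Suc t'..<t]"
    using assms(1) by (simp add: upt_conv_Cons)
  ultimately show ?thesis
    using g(2) by (simp add: passage_weight_def)
qed

lemma same_residue_distance:
  fixes t t' :: nat
  assumes "t < t'" "t' < p * q" "t mod q = t' mod q"
  obtains d where "t' = t + d * q" "0 < d" "d < p"
proof -
  have "q dvd t' - t"
    using assms mod_eq_dvd_iff_nat [of t t' q] by simp
  then obtain d where d: "t' - t = d * q"
    by (auto simp: dvd_def mult.commute)
  have "t' = t + d * q"
    using d assms(1) by linarith
  moreover have "0 < d"
    using d assms(1) by (cases d) auto
  moreover have "d * q < p * q"
    using d assms(1,2) by linarith
  then have "d < p"
    by simp
  ultimately show ?thesis
    by (rule that)
qed

lemma int_eq_div_mod: "int t = int p * int (t div p) + int (t mod p)"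
proof -
  have "int t = int (p * (t div p) + t mod p)"
    by simp
  then show ?thesis
    by (simp only: of_nat_add of_nat_mult)
qed

lemma diff_cong_diff_mod:
  fixes t t' p :: nat
  assumes "t \<le> t'"
  shows "[int (t' - t) = int (t' mod p) - int (t mod p)] (mod int p)"
proof -
  have "int (t' - t) - (int (t' mod p) - int (t mod p)) = int p * (int (t' div p) - int (t div p))"
    using assms int_eq_div_mod [of t p] int_eq_div_mod [of t' p] by (simp add: of_nat_diff algebra_simps)
  then show ?thesis
    by (simp add: cong_iff_dvd_diff)
qed

lemma cong_pm_mult_imp_nonzero:
  fixes x :: int
  assumes "coprime p n" "0 < d" "d < p"
    and "[x = int (d * n)] (mod int p) \<or> [x = - int (d * n)] (mod int p)"
  shows "x \<noteq> 0"
proof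
  assume "x = 0"
  then have "[int (d * n) = 0] (mod int p)"
    using assms(4) cong_minus_minus_iff [of 0 "int (d * n)" "int p"] by (auto simp: cong_sym_eq)
  then have "p dvd d * n"
    by (simp add: cong_0_iff flip: of_nat_mult)
  then have "p dvd d"
    using assms(1) by (simp add: coprime_dvd_mult_left_iff)
  then show False
    using assms(2,3) by (auto dest: dvd_imp_le)
qed

lemma cong_shift_over_first:
  fixes W :: int
  assumes "[W + int D = int M] (mod int p)" "[int D = int (p - 1 - j)] (mod int p)" "j < p"
  shows "[W - int j - 1 = int M] (mod int p)"
proof -
  have "W - int j - 1 - int M = (W + int D - int M) - (int D - int (p - 1 - j)) - int p"
    using assms(3) by (simp add: of_nat_diff)
  then show ?thesis
    using assms(1,2) unfolding cong_iff_dvd_diff by (metis dvd_diff dvd_refl)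
qed

lemma cong_shift_under_first:
  fixes W :: int
  assumes "[W + int D = int M] (mod int p)" "[int D = - int (p - 1 - j)] (mod int p)" "j < p"
  shows "[- (W + 1 + int j) = - int M] (mod int p)"
proof -
  have "- (W + 1 + int j) - - int M = (int D - - int (p - 1 - j)) - (W + int D - int M) - int p"
    using assms(3) by (simp add: of_nat_diff)
  then show ?thesis
    using assms(1,2) unfolding cong_iff_dvd_diff by (metis dvd_diff dvd_refl)
qed

context
  fixes n p q :: nat
  assumes p2: "2 \<le> p" and q0: "0 < q" and coprime_pq: "coprime p q"
begin

text \<open>The crossing \<open>c = i * (p - 1) + j\<close> is passed over at step \<open>To\<close> and under at step
  \<open>Tu\<close>; both are determined by the Chinese remainder theorem.\<close>
lemma crossing_steps:
  assumes "n \<le> i" "i < q" "j < p - 1"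
  obtains To Tu where "To < p * q" "To mod p = 0" "To mod q = i"
    "Tu < p * q" "Tu mod p = p - 1 - j" "Tu mod q = i"
    "\<And>T. T < p * q \<Longrightarrow> filter (\<lambda>l. lab l = i * (p - 1) + j) (step_code n p q T) =
       (if T = To then [GL (i * (p - 1) + j) True True]
        else if T = Tu then [GL (i * (p - 1) + j) False True] else [])"
proof -
  have crt: "\<exists>!T. T < p * q \<and> T mod p = r \<and> T mod q = i" if "r < p" for r
    using binary_chinese_remainder_unique_nat [OF coprime_pq, of r i] p2 q0 assms(2) that
    by (simp add: cong_def)
  have "0 < p" "p - 1 - j < p" "p - 1 - j \<noteq> 0"
    using p2 assms(3) by auto
  obtain To where To: "To < p * q \<and> To mod p = 0 \<and> To mod q = i"
    and To_unique: "\<forall>T. T < p * q \<and> T mod p = 0 \<and> T mod q = i \<longrightarrow> T = To"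
    by (rule ex1E [OF crt [OF \<open>0 < p\<close>]])
  obtain Tu where Tu: "Tu < p * q \<and> Tu mod p = p - 1 - j \<and> Tu mod q = i"
    and Tu_unique: "\<forall>T. T < p * q \<and> T mod p = p - 1 - j \<and> T mod q = i \<longrightarrow> T = Tu"
    by (rule ex1E [OF crt [OF \<open>p - 1 - j < p\<close>]])
  have "T = To \<longleftrightarrow> T mod p = 0 \<and> T mod q = i" "T = Tu \<longleftrightarrow> T mod p = p - 1 - j \<and> T mod q = i"
    if "T < p * q" for T
    using that To Tu by (auto intro: To_unique [rule_format] Tu_unique [rule_format])
  then have "filter (\<lambda>l. lab l = i * (p - 1) + j) (step_code n p q T) =
       (if T = To then [GL (i * (p - 1) + j) True True]
        else if T = Tu then [GL (i * (p - 1) + j) False True] else [])" if "T < p * q" for T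
    using filter_step_code [OF p2 assms(3), of i n q T] that assms(1) \<open>p - 1 - j \<noteq> 0\<close> by auto
  then show ?thesis
    by (rule that [of To Tu, rotated -1]) (use To Tu in simp_all)
qed

lemma crossing_pair_VT:
  assumes "n \<le> i" "i < q" "j < p - 1"
  shows "crossing_pair (i * (p - 1) + j) (filter (\<lambda>l. lab l = i * (p - 1) + j) (VT n p q))"
proof -
  let ?c = "i * (p - 1) + j"
  obtain To Tu where T: "To < p * q" "To mod p = 0" "To mod q = i"
      "Tu < p * q" "Tu mod p = p - 1 - j" "Tu mod q = i"
    and g: "\<And>T. T < p * q \<Longrightarrow> filter (\<lambda>l. lab l = ?c) (step_code n p q T) =
       (if T = To then [GL ?c True True] else if T = Tu then [GL ?c False True] else [])"
    by (rule crossing_steps [OF assms], rule that)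
  define g where "g T = filter (\<lambda>l. lab l = ?c) (step_code n p q T)" for T
  have "To \<noteq> Tu"
    using T assms(3) by auto
  then have g_To: "g To = [GL ?c True True]" and g_Tu: "g Tu = [GL ?c False True]"
    using g T by (simp_all add: g_def)
  have g_other: "g T = []" if "T < p * q" "T \<noteq> To" "T \<noteq> Tu" for T
    using g that by (simp add: g_def)
  have "filter (\<lambda>l. lab l = ?c) (VT n p q) = concat (map g [0..<p * q])"
    unfolding g_def [abs_def] by (simp add: VT_eq_concat_step_code [OF p2] filter_concat comp_def)
  also have "\<dots> = (if To < Tu then g To @ g Tu else g Tu @ g To)"
  proof (cases "To < Tu")
    case True
    then show ?thesis
      using concat_map_upt_two [OF True T(4) g_other] by simp
  next
    case False
    then have "Tu < To"
      using \<open>To \<noteq> Tu\<close> by simp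
    then show ?thesis
      using False concat_map_upt_two [OF \<open>Tu < To\<close> T(1)] g_other by auto
  qed
  finally show ?thesis
    using g_To g_Tu by (auto simp: crossing_pair_def)
qed

lemma crossing_step_codes:
  assumes "n \<le> i" "i < q" "j < p - 1"
  obtains To Tu pre post where "To < p * q" "Tu < p * q" "To mod p = 0" "Tu mod p = p - 1 - j"
    "To mod q = Tu mod q"
    "step_code n p q To = pre @ GL (i * (p - 1) + j) True True # post"
    "step_code n p q Tu = [GL (i * (p - 1) + j) False True]"
    "i * (p - 1) + j \<notin> labels pre" "i * (p - 1) + j \<notin> labels post"
    "\<And>T. T < p * q \<Longrightarrow> T \<noteq> To \<Longrightarrow> T \<noteq> Tu \<Longrightarrow> i * (p - 1) + j \<notin> labels (step_code n p q T)"
    "code_weight pre = int j"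
proof -
  let ?c = "i * (p - 1) + j"
  obtain To Tu where T: "To < p * q" "To mod p = 0" "To mod q = i"
      "Tu < p * q" "Tu mod p = p - 1 - j" "Tu mod q = i"
    and occ: "\<And>T. T < p * q \<Longrightarrow> filter (\<lambda>l. lab l = ?c) (step_code n p q T) =
       (if T = To then [GL ?c True True] else if T = Tu then [GL ?c False True] else [])"
    by (rule crossing_steps [OF assms], rule that)
  define pre where "pre = map (\<lambda>m. GL (i * (p - 1) + m) True True) [0..<j]"
  define post where "post = map (\<lambda>m. GL (i * (p - 1) + m) True True) [Suc j..<p - 1]"
  have "step_code n p q To = pre @ GL ?c True True # post"
    using step_code_over [OF T(3) assms(1) T(2) assms(3)] by (simp add: pre_def post_def)
  moreover have "step_code n p q Tu = [GL ?c False True]"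
    by (rule step_code_under [OF T(6) assms(1) T(5) assms(3)])
  moreover have "?c \<notin> labels pre" "?c \<notin> labels post" "code_weight pre = int j"
    by (auto simp: pre_def post_def labels_def code_weight_over_letters)
  moreover have "?c \<notin> labels (step_code n p q T)" if "T < p * q" "T \<noteq> To" "T \<noteq> Tu" for T
    using occ [OF that(1)] that(2,3) by (simp add: notin_labels_iff_filter)
  ultimately show ?thesis
    using that T by simp
qed

lemma chord_index_VT_nonzero:
  assumes "n \<le> q" "coprime p n" "n \<le> i" "i < q" "j < p - 1"
  shows "chord_index (VT n p q) (i * (p - 1) + j) \<noteq> 0"
proof -
  let ?c = "i * (p - 1) + j"
  define W where "W t t' = code_weight (concat (map (step_code n p q) [t..<t']))" for t t'
  obtain To Tu pre post where T: "To < p * q" "Tu < p * q" "To mod p = 0" "Tu mod p = p - 1 - j"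
      "To mod q = Tu mod q"
    and step: "step_code n p q To = pre @ GL ?c True True # post" "step_code n p q Tu = [GL ?c False True]"
    and free: "?c \<notin> labels pre" "?c \<notin> labels post"
      "\<And>T. T < p * q \<Longrightarrow> T \<noteq> To \<Longrightarrow> T \<noteq> Tu \<Longrightarrow> ?c \<notin> labels (step_code n p q T)"
    and pre: "code_weight pre = int j"
    by (rule crossing_step_codes [OF assms(3-5)], rule that)
  have VT: "VT n p q = concat (map (step_code n p q) [0..<p * q])"
    by (rule VT_eq_concat_step_code [OF p2])
  have steps: "[W t (t + d * q) + int (d * q) = int (d * n)] (mod int p)" for t d
    unfolding W_def using p2 assms(1) by (intro code_weight_steps_cong) simp_all
  have "To \<noteq> Tu"
    using T(3,4) assms(5) by auto
  then consider "To < Tu" | "Tu < To"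
    by linarith
  then show ?thesis
  proof cases
    case 1
    obtain d where d: "Tu = To + d * q" "0 < d" "d < p"
      by (rule same_residue_distance [OF 1 T(2,5)])
    have "chord_index (VT n p q) ?c = W To Tu - int j - 1"
      unfolding VT W_def using chord_index_concat_over_first [OF 1 T(2) step free] pre by simp
    moreover have "[int (d * q) = int (p - 1 - j)] (mod int p)"
      using diff_cong_diff_mod [of To Tu p] d(1) T(3,4) by simp
    ultimately have "[chord_index (VT n p q) ?c = int (d * n)] (mod int p)"
      using cong_shift_over_first [OF steps [of To d, folded d(1)]] assms(5) by simp
    then show ?thesis
      using cong_pm_mult_imp_nonzero [OF assms(2) d(2,3)] by blast
  next
    case 2
    obtain d where d: "To = Tu + d * q" "0 < d" "d < p"
      by (rule same_residue_distance [OF 2 T(1) T(5) [symmetric]])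
    have "chord_index (VT n p q) ?c = - (W Tu To + 1 + int j)"
      unfolding VT W_def using chord_index_concat_under_first [OF 2 T(1) step free] pre by simp
    moreover have "[int (d * q) = - int (p - 1 - j)] (mod int p)"
      using diff_cong_diff_mod [of Tu To p] d(1) T(3,4) by simp
    ultimately have "[chord_index (VT n p q) ?c = - int (d * n)] (mod int p)"
      using cong_shift_under_first [OF steps [of Tu d, folded d(1)]] assms(5) by simp
    then show ?thesis
      using cong_pm_mult_imp_nonzero [OF assms(2) d(2,3)] by blast
  qed
qed

lemma mem_labels_VT: "c \<in> labels (VT n p q) \<longleftrightarrow> n \<le> c div (p - 1) \<and> c div (p - 1) < q"
proof -
  define i j where "i = c div (p - 1)" and "j = c mod (p - 1)"
  have c: "c = i * (p - 1) + j" "j < p - 1" and i: "c div (p - 1) = i"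
    using p2 by (simp_all add: i_def j_def div_mult_mod_eq)
  show ?thesis
  proof (cases "n \<le> i \<and> i < q")
    case True
    then have "filter (\<lambda>l. lab l = c) (VT n p q) \<noteq> []"
      using crossing_pair_VT [of i j] True c by (auto simp: crossing_pair_def)
    then show ?thesis
      using True i by (simp add: notin_labels_iff_filter [symmetric])
  next
    case False
    have "filter (\<lambda>l. lab l = c) (step_code n p q T) = []" if "T < p * q" for T
      using filter_step_code [OF p2 c(2), of i n q T] False mod_less_divisor [OF q0, of T] c(1) by auto
    then have "c \<notin> labels (VT n p q)"
      by (simp add: VT_eq_concat_step_code [OF p2] notin_labels_iff_filter filter_concat comp_def)
    then show ?thesis
      using False i by simp
  qed
qed

lemma VT_label_cases:
  assumes "c \<in> labels (VT n p q)"
  obtains i j where "c = i * (p - 1) + j" "j < p - 1" "n \<le> i" "i < q"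
proof
  show "c = c div (p - 1) * (p - 1) + c mod (p - 1)" "c mod (p - 1) < p - 1"
    using p2 by (simp_all add: div_mult_mod_eq)
  show "n \<le> c div (p - 1)" "c div (p - 1) < q"
    using assms by (simp_all add: mem_labels_VT)
qed

lemma proper_code_VT: "proper_code (VT n p q)"
  unfolding proper_code_def
proof
  fix c
  assume "c \<in> labels (VT n p q)"
  then obtain i j where "c = i * (p - 1) + j" "j < p - 1" "n \<le> i" "i < q"
    by (rule VT_label_cases)
  then show "crossing_pair c (filter (\<lambda>l. lab l = c) (VT n p q))"
    using crossing_pair_VT by simp
qed

lemma card_labels_VT: "card (labels (VT n p q)) = (p - 1) * (q - n)"
proof -
  have "labels (VT n p q) = {n * (p - 1)..<q * (p - 1)}"
    using p2 by (auto simp: mem_labels_VT less_eq_div_iff_mult_less_eq div_less_iff_less_mult)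
  then show ?thesis
    by (simp add: diff_mult_distrib mult.commute)
qed

lemma nonzero_writhe_VT:
  assumes "n \<le> q" "coprime p n"
  shows "nonzero_writhe (VT n p q) = int ((p - 1) * (q - n))"
proof -
  have per_crossing: "(\<Sum>l\<leftarrow>filter (\<lambda>l. lab l = c) (VT n p q). writhe_term (VT n p q) l) = 1"
    if c_in: "c \<in> labels (VT n p q)" for c
  proof -
    obtain i j where c: "c = i * (p - 1) + j" "j < p - 1" "n \<le> i" "i < q"
      using c_in by (rule VT_label_cases)
    obtain ov s where pair: "filter (\<lambda>l. lab l = c) (VT n p q) = [GL c ov s, GL c (\<not> ov) s]"
      using c_in proper_code_VT by (auto simp: proper_code_def crossing_pair_def)
    then have "GL c ov s \<in> set (filter (\<lambda>l. lab l = c) (VT n p q))"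
      by simp
    then have "s"
      using positive_VT [OF p2, of "GL c ov s"] by simp
    moreover have "chord_index (VT n p q) c \<noteq> 0"
      using chord_index_VT_nonzero [OF assms c(3,4,2)] c(1) by simp
    ultimately show ?thesis
      using pair by (cases ov) (simp_all add: writhe_term_def crossing_sign_def)
  qed
  have "nonzero_writhe (VT n p q)
      = (\<Sum>c\<in>labels (VT n p q). \<Sum>l\<leftarrow>filter (\<lambda>l. lab l = c) (VT n p q). writhe_term (VT n p q) l)"
    unfolding nonzero_writhe_def by (rule sum_list_by_label [OF finite_labels order_refl])
  also have "\<dots> = (\<Sum>c\<in>labels (VT n p q). 1)"
    using per_crossing by (rule sum.cong [OF HOL.refl])
  finally show ?thesis
    by (simp add: card_labels_VT)
qed

end

theorem lemma5p1:
  fixes p q n :: nat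
  assumes "p \<ge> 1" and "q \<ge> 1" and "coprime p q"
    and "1 \<le> n" and "n \<le> q" and "coprime p n"
  shows "enat ((p - 1) * (q - n)) \<le> 2 * vu (VT n p q)"
proof (cases "p = 1")
  case True
  then have "enat ((p - 1) * (q - n)) = 0"
    by (simp add: zero_enat_def)
  then show ?thesis
    by simp
next
  case False
  then have "2 \<le> p" "0 < q"
    using assms(1,2) by simp_all
  then show ?thesis
    using vu_lower_bound [OF proper_code_VT] nonzero_writhe_VT assms(3,5,6) by simp
qed

end
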